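(* Let $A=(a_{ij})\in M(m,\mathbb{C})$ and let $X_A$ be a complex algebra spanned by elements $\{x_{ij}:i,j=1,\ldots,m\}$ satisfying $x_{ij}x_{kl}=a_{jk}x_{il}$. Suppose the elements $x_{ij}$ are linearly independent and $\det A=0$. Then $X_A$ contains a nonzero properly nilpotent element, and consequently $X_A$ is not semisimple.
   Context: An element $z$ of an algebra $\mathcal{X}$ is properly nilpotent if $zx$ (equivalently, $xz$) is nilpotent for every $x\in\mathcal{X}$. An algebra is semisimple if its Jacobson radical (the set of properly nilpotent elements, for finite-dimensional algebras) is zero. *)

theory Defs
  imports "HOL-Analysis.Analysis"
begin

definition complex_algebra :: "(complex \<Rightarrow> 'a::ring \<Rightarrow> 'a) \<Rightarrow> bool" where
  "complex_algebra smul \<longleftrightarrow> module smul \<and>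
     (\<forall>c u v. smul c (u * v) = smul c u * v \<and> smul c (u * v) = u * smul c v)"

text \<open>y is nilpotent: y^(n+1) = 0 for some n (powers written without a unit).\<close>
definition nilpotent_elem :: "'a::ring \<Rightarrow> bool" where
  "nilpotent_elem y \<longleftrightarrow> (\<exists>n. ((\<lambda>u. u * y) ^^ n) y = 0)"

definition properly_nilpotent :: "'a::ring \<Rightarrow> bool" where
  "properly_nilpotent z \<longleftrightarrow> (\<forall>x. nilpotent_elem (z * x))"

text \<open>Jacobson radical of a finite-dimensional algebra: the set of properly nilpotent elements.\<close>
definition jacobson_radical :: "'a::ring set" where
  "jacobson_radical = {z. properly_nilpotent z}"

definition semisimple :: "'a::ring itself \<Rightarrow> bool" where
  "semisimple (_ :: 'a itself) \<longleftrightarrow> (jacobson_radical :: 'a set) = {0}"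

end

theory Submission
  imports Defs
begin

text \<open>Since \<open>det A = 0\<close>, some row vector \<open>v \<noteq> 0\<close> has \<open>v A = 0\<close>. For any \<open>i\<close>, the element
  \<open>z = \<Sum>\<^sub>k v\<^sub>k x\<^sub>i\<^sub>k\<close> then satisfies \<open>z x\<^sub>p\<^sub>q = (\<Sum>\<^sub>k v\<^sub>k a\<^sub>k\<^sub>p) x\<^sub>i\<^sub>q = 0\<close>, so \<open>z\<close> is a left
  annihilator of \<open>X\<^sub>A\<close>; in particular every \<open>z x\<close> is zero, hence nilpotent. Linear independence
  of the \<open>x\<^sub>i\<^sub>j\<close> makes \<open>z\<close> nonzero.\<close>

lemma singular_matrix_left_null_vector:
  fixes A :: "'a::field ^ 'n ^ 'n"
  assumes "det A = 0"
  obtains v where "v \<noteq> 0" "v v* A = 0"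
proof -
  have "\<not> invertible (transpose A)"
    using assms by (simp add: invertible_det_nz)
  then have "\<not> (\<forall>v. transpose A *v v = 0 \<longrightarrow> v = 0)"
    using invertible_left_inverse matrix_left_invertible_ker by blast
  then show thesis
    using that by auto
qed

lemma left_annihilator_properly_nilpotent:
  fixes z :: "'a::ring"
  assumes "\<And>y. z * y = 0"
  shows "properly_nilpotent z"
  unfolding properly_nilpotent_def nilpotent_elem_def
  by (metis assms funpow_0)

lemma properly_nilpotent_not_semisimple:
  fixes z :: "'a::ring"
  assumes "z \<noteq> 0" and "properly_nilpotent z"
  shows "\<not> semisimple TYPE('a)"
  using assms by (auto simp: semisimple_def jacobson_radical_def)

context
  fixes smul :: "complex \<Rightarrow> 'a::ring \<Rightarrow> 'a"
    and x :: "'m::finite \<Rightarrow> 'm \<Rightarrow> 'a"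
  assumes alg: "complex_algebra smul"
begin

interpretation module smul
  using alg unfolding complex_algebra_def by blast

lemma algebra_scale_mult_left: "smul c u * w = smul c (u * w)"
  and algebra_scale_mult_right: "u * smul c w = smul c (u * w)"
  using alg unfolding complex_algebra_def by metis+

lemma left_annihilator_of_spanning:
  assumes spans: "\<forall>y. \<exists>c. y = (\<Sum>i\<in>UNIV. \<Sum>j\<in>UNIV. smul (c i j) (x i j))"
    and ann: "\<And>p q. z * x p q = 0"
  shows "z * y = 0"
proof -
  obtain c where c: "y = (\<Sum>i\<in>UNIV. \<Sum>j\<in>UNIV. smul (c i j) (x i j))"
    using spans by blast
  have "z * y = (\<Sum>i\<in>UNIV. \<Sum>j\<in>UNIV. smul (c i j) (z * x i j))"
    unfolding c by (simp add: sum_distrib_left algebra_scale_mult_right)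
  then show ?thesis
    by (simp add: ann)
qed

lemma null_row_combination_annihilates:
  fixes A :: "complex ^ 'm ^ 'm"
  assumes rel: "\<forall>i j k l. x i j * x k l = smul (A $ j $ k) (x i l)"
    and null: "v v* A = 0"
  shows "(\<Sum>k\<in>UNIV. smul (v $ k) (x i k)) * x p q = 0"
proof -
  have "(\<Sum>k\<in>UNIV. smul (v $ k) (x i k)) * x p q = (\<Sum>k\<in>UNIV. smul (v $ k * A $ k $ p) (x i q))"
    by (simp add: sum_distrib_right algebra_scale_mult_left rel)
  also have "\<dots> = smul ((v v* A) $ p) (x i q)"
    by (simp add: vector_matrix_mult_def scale_sum_left)
  finally show ?thesis
    by (simp add: null)
qed

lemma row_combination_nonzero:
  assumes indep: "\<forall>c. (\<Sum>i\<in>UNIV. \<Sum>j\<in>UNIV. smul (c i j) (x i j)) = 0 \<longrightarrow> (\<forall>i j. c i j = 0)"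
    and "v \<noteq> 0"
  shows "(\<Sum>k\<in>UNIV. smul (v $ k) (x i k)) \<noteq> 0"
proof
  assume z0: "(\<Sum>k\<in>UNIV. smul (v $ k) (x i k)) = 0"
  define c where "c = (\<lambda>i' k. if i' = i then v $ k else 0)"
  have "(\<Sum>i'\<in>UNIV. \<Sum>j\<in>UNIV. smul (c i' j) (x i' j))
      = (\<Sum>i'\<in>UNIV. if i' = i then \<Sum>k\<in>UNIV. smul (v $ k) (x i k) else 0)"
    by (rule sum.cong) (auto simp: c_def)
  then have "(\<Sum>i'\<in>UNIV. \<Sum>j\<in>UNIV. smul (c i' j) (x i' j)) = 0"
    using z0 by simp
  then have "\<forall>k. c i k = 0"
    using indep by blast
  then have "v = 0"
    by (simp add: c_def vec_eq_iff)
  with \<open>v \<noteq> 0\<close> show False ..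
qed

end

theorem theorem32:
  fixes A :: "complex ^ 'm ^ 'm"
    and smul :: "complex \<Rightarrow> 'a::ring \<Rightarrow> 'a"
    and x :: "'m \<Rightarrow> 'm \<Rightarrow> 'a"
  assumes alg: "complex_algebra smul"
    and spans: "\<forall>y. \<exists>c :: 'm \<Rightarrow> 'm \<Rightarrow> complex. y = (\<Sum>i\<in>UNIV. \<Sum>j\<in>UNIV. smul (c i j) (x i j))"
    and indep: "\<forall>c :: 'm \<Rightarrow> 'm \<Rightarrow> complex.
                  (\<Sum>i\<in>UNIV. \<Sum>j\<in>UNIV. smul (c i j) (x i j)) = 0 \<longrightarrow> (\<forall>i j. c i j = 0)"
    and rel: "\<forall>i j k l. x i j * x k l = smul (A $ j $ k) (x i l)"
    and detA: "det A = 0"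
  shows "(\<exists>z::'a. z \<noteq> 0 \<and> properly_nilpotent z) \<and> \<not> semisimple TYPE('a)"
proof -
  obtain v where "v \<noteq> 0" and null: "v v* A = 0"
    using singular_matrix_left_null_vector detA by blast
  fix i :: 'm
  define z where "z = (\<Sum>k\<in>UNIV. smul (v $ k) (x i k))"
  have "z \<noteq> 0"
    unfolding z_def using row_combination_nonzero[OF alg indep \<open>v \<noteq> 0\<close>] .
  moreover have "properly_nilpotent z"
  proof (rule left_annihilator_properly_nilpotent)
    fix y
    show "z * y = 0"
      using left_annihilator_of_spanning[OF alg spans]
        null_row_combination_annihilates[OF alg rel null]
      unfolding z_def by blast
  qed
  ultimately show ?thesis
    using properly_nilpotent_not_semisimple by blast
qed

end
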